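(* Let $\Gamma$ be a locally finite vertex-transitive weighted graph with distinguished vertex $e$. If vertices $x,y$ satisfy $\mathbb{P}_e[T_x<\infty]>\mathbb{P}_e[T_y<\infty]$, then they also satisfy $\mathbb{P}_e[\,T_x<T_y\mid\min\{T_x,T_y\}<\infty\,]>1/2$. If the random walk on $\Gamma$ is transient then these two conditions are equivalent.
   Context: Weighted graph: undirected, no loops or multiple edges, weights $\omega_{xy}=\omega_{yx}>0$, $\deg x=\sum_{y\sim x}\omega_{xy}$; vertex-transitive means the group of weight-preserving automorphisms acts transitively on vertices. $(X_t)$ is the random walk stepping from $z$ to neighbour $w$ with probability $\omega_{zw}/\deg z$; $\mathbb{P}_g$ denotes its law with $X_0=g$; $T_z=\inf\{t\ge0:X_t=z\}$. The walk is transient if the probability of ever returning (at a time $t\ge1$) to the starting vertex is less than $1$. *)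

theory Defs
  imports "HOL-Analysis.Analysis"
begin

text \<open>A weighted graph on vertex type 'a is given by a weight function w.
  Edges are the pairs with positive weight.\<close>

definition weighted_graph :: "('a \<Rightarrow> 'a \<Rightarrow> real) \<Rightarrow> bool" where
  "weighted_graph w \<longleftrightarrow> (\<forall>x y. w x y = w y x) \<and> (\<forall>x y. 0 \<le> w x y) \<and> (\<forall>x. w x x = 0)"

definition locally_finite :: "('a \<Rightarrow> 'a \<Rightarrow> real) \<Rightarrow> bool" where
  "locally_finite w \<longleftrightarrow> (\<forall>x. finite {y. 0 < w x y})"

definition vertex_transitive :: "('a \<Rightarrow> 'a \<Rightarrow> real) \<Rightarrow> bool" where
  "vertex_transitive w \<longleftrightarrow>
     (\<forall>u v. \<exists>\<phi>. bij \<phi> \<and> (\<forall>a b. w (\<phi> a) (\<phi> b) = w a b) \<and> \<phi> u = v)"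

definition deg :: "('a \<Rightarrow> 'a \<Rightarrow> real) \<Rightarrow> 'a \<Rightarrow> real" where
  "deg w x = (\<Sum>y | 0 < w x y. w x y)"

text \<open>Probability that the random walk follows a given finite path (list of vertices).\<close>
fun path_prob :: "('a \<Rightarrow> 'a \<Rightarrow> real) \<Rightarrow> 'a list \<Rightarrow> real" where
  "path_prob w (a # b # xs) = w a b / deg w a * path_prob w (b # xs)"
| "path_prob w _ = 1"

text \<open>Paths from e stopped at the first visit (time >= 0) of the set S.\<close>
definition first_passage_paths :: "'a \<Rightarrow> 'a set \<Rightarrow> 'a list set" where
  "first_passage_paths e S =
     {xs. xs \<noteq> [] \<and> hd xs = e \<and> last xs \<in> S \<and> set (butlast xs) \<inter> S = {}}"

text \<open>P_e[T_S < infinity]; in particular P_e[T_x < infinity] = hit_prob w e {x}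
  and P_e[min(T_x,T_y) < infinity] = hit_prob w e {x,y}.\<close>
definition hit_prob :: "('a \<Rightarrow> 'a \<Rightarrow> real) \<Rightarrow> 'a \<Rightarrow> 'a set \<Rightarrow> ennreal" where
  "hit_prob w e S = (\<Sum>\<^sub>\<infinity>xs \<in> first_passage_paths e S. ennreal (path_prob w xs))"

text \<open>P_e[T_x < T_y] (this event is contained in min(T_x,T_y) < infinity).\<close>
definition hit_first :: "('a \<Rightarrow> 'a \<Rightarrow> real) \<Rightarrow> 'a \<Rightarrow> 'a \<Rightarrow> 'a \<Rightarrow> ennreal" where
  "hit_first w e x y =
     (\<Sum>\<^sub>\<infinity>xs \<in> {xs \<in> first_passage_paths e {x, y}. last xs = x \<and> x \<noteq> y}.
        ennreal (path_prob w xs))"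

text \<open>P_e[T_x < T_y | min(T_x,T_y) < infinity].\<close>
definition cond_hit_first :: "('a \<Rightarrow> 'a \<Rightarrow> real) \<Rightarrow> 'a \<Rightarrow> 'a \<Rightarrow> 'a \<Rightarrow> real" where
  "cond_hit_first w e x y = enn2real (hit_first w e x y) / enn2real (hit_prob w e {x, y})"

text \<open>Probability of ever returning to g at some time t >= 1.\<close>
definition return_prob :: "('a \<Rightarrow> 'a \<Rightarrow> real) \<Rightarrow> 'a \<Rightarrow> ennreal" where
  "return_prob w g =
     (\<Sum>\<^sub>\<infinity>xs \<in> {xs. 2 \<le> length xs \<and> hd xs = g \<and> last xs = g \<and> g \<notin> set (tl (butlast xs))}.
        ennreal (path_prob w xs))"

definition transient :: "('a \<Rightarrow> 'a \<Rightarrow> real) \<Rightarrow> 'a \<Rightarrow> bool" where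
  "transient w g \<longleftrightarrow> return_prob w g < 1"

end

theory Submission
  imports Defs
begin

text \<open>Let \<open>a\<close> and \<open>b\<close> be the probabilities, starting from \<open>e\<close>, of hitting \<open>x\<close> before \<open>y\<close> and
  \<open>y\<close> before \<open>x\<close>, and \<open>F u v = P\<^sub>u[T\<^sub>v < \<infinity>]\<close>. Cutting a path at its first visit to the other
  point gives \<open>P\<^sub>e[T\<^sub>x < \<infinity>] = a + b F y x\<close> and \<open>P\<^sub>e[T\<^sub>y < \<infinity>] = b + a F x y\<close>. On a
  vertex-transitive graph \<open>F x y = F y x =: p\<close>, so the two hitting probabilities differ by
  \<open>(a - b)(1 - p)\<close>, while the conditional probability is \<open>a / (a + b)\<close>; transience gives \<open>p < 1\<close>.

  For the symmetry, cut paths at the last visit to the starting point. With \<open>q\<close> the mass of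
  the last-exit paths from \<open>u\<close> to \<open>v\<close> (symmetric in \<open>u, v\<close>, since the degree is constant and the walk
  is reversible), \<open>r\<^sub>u\<close> the probability of returning to \<open>u\<close> before visiting \<open>v\<close>, and \<open>R\<close> the
  return probability (the same at every vertex), one gets \<open>F u v = q + r\<^sub>u F u v\<close> and
  \<open>R = r\<^sub>u + q F v u\<close>; these equations and their mirror images force \<open>F u v = F v u\<close>.\<close>

lemma deg_nonneg: "weighted_graph w \<Longrightarrow> 0 \<le> deg w x"
  unfolding deg_def weighted_graph_def by (auto intro: sum_nonneg)

lemma path_prob_nonneg:
  assumes "weighted_graph w"
  shows "0 \<le> path_prob w xs"
proof (induction xs)
  case (Cons a t)
  then show ?case using assms deg_nonneg[OF assms, of a]
    by (cases t) (auto simp: weighted_graph_def intro!: divide_nonneg_nonneg mult_nonneg_nonneg)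
qed auto

lemma path_prob_append:
  "xs \<noteq> [] \<Longrightarrow> ys \<noteq> [] \<Longrightarrow> last xs = hd ys \<Longrightarrow>
     path_prob w (xs @ tl ys) = path_prob w xs * path_prob w ys"
proof (induction xs)
  case (Cons a t) then show ?case by (cases t; cases ys) auto
qed auto

lemma path_prob_map:
  assumes "\<And>a b. w (\<phi> a) (\<phi> b) = w a b" and "\<And>a. deg w (\<phi> a) = deg w a"
  shows "path_prob w (map \<phi> xs) = path_prob w xs"
proof (induction xs)
  case (Cons a t) then show ?case using assms by (cases t) auto
qed simp

lemma path_prob_rev:
  assumes "weighted_graph w" and deg_eq: "\<And>a b. deg w a = deg w b"
  shows "path_prob w (rev xs) = path_prob w xs"
proof (induction xs)
  case (Cons a t)
  show ?case
  proof (cases t)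
    case (Cons b t')
    have "path_prob w (rev (a # t)) = path_prob w (rev t @ tl [b, a])" by simp
    also have "\<dots> = path_prob w (rev t) * (w b a / deg w b)"
      using Cons by (subst path_prob_append) (auto simp: last_rev)
    also have "\<dots> = w a b / deg w a * path_prob w t"
      using Cons.IH deg_eq[of b a] assms(1)[unfolded weighted_graph_def] by (metis mult.commute)
    finally show ?thesis using Cons by simp
  qed simp
qed simp

lemma deg_eq_of_vertex_transitive:
  assumes "vertex_transitive w"
  shows "deg w a = deg w b"
proof -
  obtain \<phi> where \<phi>: "bij \<phi>" "\<And>a b. w (\<phi> a) (\<phi> b) = w a b" "\<phi> a = b"
    using assms unfolding vertex_transitive_def by blast
  have nbhd: "{y. 0 < w b y} = \<phi> ` {z. 0 < w a z}"
    using \<phi> by (auto simp: image_iff, metis bij_pointE)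
  have "deg w b = sum (w b \<circ> \<phi>) {z. 0 < w a z}"
    unfolding deg_def nbhd using \<phi>(1)
    by (intro sum.reindex inj_on_subset[OF bij_is_inj subset_UNIV])
  also have "\<dots> = deg w a"
    unfolding deg_def o_def \<phi>(3)[symmetric] \<phi>(2) ..
  finally show ?thesis by simp
qed

lemma transition_sum_le_1:
  assumes wg: "weighted_graph w" and lf: "locally_finite w" and "finite V"
  shows "(\<Sum>v\<in>V. w u v / deg w u) \<le> 1"
proof -
  have "(\<Sum>v\<in>V. w u v) = (\<Sum>v\<in>V \<inter> {y. 0 < w u y}. w u v)"
    using wg \<open>finite V\<close> unfolding weighted_graph_def
    by (intro sum.mono_neutral_right) (auto simp: order.strict_iff_order)
  also have "\<dots> \<le> deg w u"
    unfolding deg_def using lf wg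
    by (intro sum_mono2) (auto simp: locally_finite_def weighted_graph_def)
  finally show ?thesis
    using deg_nonneg[OF wg, of u]
    by (cases "deg w u = 0") (auto simp: sum_divide_distrib[symmetric] divide_le_eq_1)
qed

subsection \<open>Prefix-free families of paths\<close>

text \<open>The walk follows at most one path of such a family, so their probabilities sum to at most 1.\<close>

definition prefix_free_from :: "'a \<Rightarrow> 'a list set \<Rightarrow> bool" where
  "prefix_free_from u F \<longleftrightarrow>
     (\<forall>xs\<in>F. xs \<noteq> [] \<and> hd xs = u) \<and> (\<forall>xs\<in>F. \<forall>zs. xs @ zs \<in> F \<longrightarrow> zs = [])"

lemma prefix_free_from_subset: "prefix_free_from u F \<Longrightarrow> G \<subseteq> F \<Longrightarrow> prefix_free_from u G"
  unfolding prefix_free_from_def by blast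

definition step_tails :: "'a list set \<Rightarrow> 'a \<Rightarrow> 'a \<Rightarrow> 'a list set" where
  "step_tails F u v = {t. u # t \<in> F \<and> t \<noteq> [] \<and> hd t = v}"

lemma prefix_free_from_step_tails:
  "prefix_free_from u F \<Longrightarrow> prefix_free_from v (step_tails F u v)"
  unfolding prefix_free_from_def step_tails_def by fastforce

lemma prefix_free_from_singleton:
  assumes "prefix_free_from u F" and "[u] \<in> F"
  shows "F = {[u]}"
proof -
  have "xs = [u]" if "xs \<in> F" for xs
  proof -
    obtain t where "xs = [u] @ t"
      using assms(1) \<open>xs \<in> F\<close> unfolding prefix_free_from_def by (metis append_Cons append_Nil list.collapse)
    then show ?thesis using assms \<open>xs \<in> F\<close> unfolding prefix_free_from_def by simp
  qed
  then show ?thesis using assms(2) by blast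
qed

lemma sum_path_prob_first_step:
  assumes "prefix_free_from u F" and "finite F" and "[u] \<notin> F"
  shows "sum (path_prob w) F = (\<Sum>v \<in> hd ` tl ` F. w u v / deg w u * sum (path_prob w) (step_tails F u v))"
proof -
  have branch: "{xs \<in> F. hd (tl xs) = v} = Cons u ` step_tails F u v" for v
  proof (intro equalityI subsetI)
    fix xs assume xs: "xs \<in> {xs \<in> F. hd (tl xs) = v}"
    then have "xs = u # tl xs"
      using assms(1) unfolding prefix_free_from_def by (metis (lifting) list.collapse mem_Collect_eq)
    moreover have "tl xs \<noteq> []" using assms(3) xs \<open>xs = u # tl xs\<close> by force
    ultimately show "xs \<in> Cons u ` step_tails F u v" using xs unfolding step_tails_def by (intro image_eqI) auto
  qed (auto simp: step_tails_def)
  have "sum (path_prob w) F = (\<Sum>v \<in> hd ` tl ` F. sum (path_prob w) {xs \<in> F. hd (tl xs) = v})"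
    using sum.group[OF assms(2), of "hd ` tl ` F" "\<lambda>xs. hd (tl xs)" "path_prob w"] assms(2)
    unfolding image_image by simp
  also have "\<dots> = (\<Sum>v \<in> hd ` tl ` F. w u v / deg w u * sum (path_prob w) (step_tails F u v))"
    unfolding branch
    by (rule sum.cong) (simp_all add: sum.reindex sum_distrib_left step_tails_def,
        rule sum.cong, auto simp: neq_Nil_conv)
  finally show ?thesis .
qed

lemma prefix_free_sum_le_1_bounded_length:
  assumes wg: "weighted_graph w" and lf: "locally_finite w"
  shows "prefix_free_from u F \<Longrightarrow> finite F \<Longrightarrow> \<forall>xs\<in>F. length xs \<le> n \<Longrightarrow> sum (path_prob w) F \<le> 1"
proof (induction n arbitrary: u F)
  case 0
  then have "F = {}" unfolding prefix_free_from_def by auto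
  then show ?case by simp
next
  case (Suc n)
  show ?case
  proof (cases "[u] \<in> F")
    case True
    then show ?thesis using prefix_free_from_singleton[OF Suc.prems(1)] by simp
  next
    case False
    have "sum (path_prob w) (step_tails F u v) \<le> 1" for v
    proof (rule Suc.IH[OF prefix_free_from_step_tails[OF Suc.prems(1)]])
      show "finite (step_tails F u v)"
        using finite_imageI[OF Suc.prems(2), of tl] by (rule finite_subset[rotated]) (force simp: step_tails_def)
      show "\<forall>xs\<in>step_tails F u v. length xs \<le> n"
        using Suc.prems(3) unfolding step_tails_def by fastforce
    qed
    then have "sum (path_prob w) F \<le> (\<Sum>v \<in> hd ` tl ` F. w u v / deg w u)"
      unfolding sum_path_prob_first_step[OF Suc.prems(1,2) False] using wg deg_nonneg[OF wg]
      by (intro sum_mono mult_left_le) (auto simp: weighted_graph_def)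
    also have "\<dots> \<le> 1"
      using transition_sum_le_1[OF wg lf] Suc.prems(2) by simp
    finally show ?thesis .
  qed
qed

lemma prefix_free_sum_le_1:
  assumes "weighted_graph w" "locally_finite w" "prefix_free_from u F" "finite F"
  shows "sum (path_prob w) F \<le> 1"
  using prefix_free_sum_le_1_bounded_length[OF assms, of "Max (length ` F)"] by (simp add: \<open>finite F\<close>)

lemma prefix_free_summable:
  assumes wg: "weighted_graph w" and lf: "locally_finite w" and pf: "prefix_free_from u F"
  shows "path_prob w summable_on F"
proof (rule nonneg_bdd_above_summable_on)
  show "bdd_above (sum (path_prob w) ` {G. G \<subseteq> F \<and> finite G})"
    using prefix_free_sum_le_1[OF wg lf prefix_free_from_subset[OF pf]] by (intro bdd_aboveI[of _ 1]) blast
qed (use path_prob_nonneg[OF wg] in blast)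

lemma prefix_free_infsum_le_1:
  assumes wg: "weighted_graph w" and lf: "locally_finite w" and pf: "prefix_free_from u F"
  shows "infsum (path_prob w) F \<le> 1"
  using prefix_free_sum_le_1[OF wg lf prefix_free_from_subset[OF pf]]
  by (intro infsum_le_finite_sums[OF prefix_free_summable[OF assms]]) blast

lemma infsum_path_prob_nonneg: "weighted_graph w \<Longrightarrow> 0 \<le> infsum (path_prob w) F"
  by (simp add: infsum_nonneg path_prob_nonneg)

lemma ennreal_infsum_path_prob:
  assumes wg: "weighted_graph w" and "path_prob w summable_on F"
  shows "(\<Sum>\<^sub>\<infinity>xs\<in>F. ennreal (path_prob w xs)) = ennreal (infsum (path_prob w) F)"
proof -
  have "infsum (ennreal \<circ> path_prob w) F = ennreal (infsum (path_prob w) F)"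
  proof (rule infsum_comm_additive_general)
    show "sum (ennreal \<circ> path_prob w) G = ennreal (sum (path_prob w) G)" for G
      using path_prob_nonneg[OF wg] by (simp add: sum_ennreal)
    show "isCont ennreal (infsum (path_prob w) F)"
      by (simp add: continuous_at_imp_continuous_within isCont_def tendsto_ennrealI)
  qed (rule assms(2))
  then show ?thesis by (simp add: o_def)
qed

definition join_paths :: "'a list \<times> 'a list \<Rightarrow> 'a list" where
  "join_paths pq = fst pq @ tl (snd pq)"

lemma join_paths_Cons [simp]: "join_paths (p, c # s) = p @ s"
  by (simp add: join_paths_def)

lemma mem_join_paths_image:
  assumes A: "A \<subseteq> {pre @ b @ [c] | b. c \<notin> set b}" and B: "B \<subseteq> range (Cons c)"
  shows "zs \<in> join_paths ` (A \<times> B) \<longleftrightarrow>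
    (\<exists>b s. zs = pre @ b @ c # s \<and> c \<notin> set b \<and> pre @ b @ [c] \<in> A \<and> c # s \<in> B)"
proof
  assume "zs \<in> join_paths ` (A \<times> B)"
  then obtain p q where pq: "p \<in> A" "q \<in> B" "zs = join_paths (p, q)" by auto
  moreover obtain b where "p = pre @ b @ [c]" "c \<notin> set b" using pq(1) A by blast
  moreover obtain s where "q = c # s" using pq(2) B by blast
  ultimately show "\<exists>b s. zs = pre @ b @ c # s \<and> c \<notin> set b \<and> pre @ b @ [c] \<in> A \<and> c # s \<in> B"
    by auto
next
  assume "\<exists>b s. zs = pre @ b @ c # s \<and> c \<notin> set b \<and> pre @ b @ [c] \<in> A \<and> c # s \<in> B"
  then obtain b s where "zs = join_paths (pre @ b @ [c], c # s)" "pre @ b @ [c] \<in> A" "c # s \<in> B"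
    by auto
  then show "zs \<in> join_paths ` (A \<times> B)" by blast
qed

lemma append_first_occurrence_eq:
  "c \<notin> set b1 \<Longrightarrow> c \<notin> set b2 \<Longrightarrow> b1 @ c # s1 = b2 @ c # s2 \<Longrightarrow> b1 = b2 \<and> s1 = s2"
proof (induction b1 arbitrary: b2)
  case Nil then show ?case by (cases b2) auto
next
  case (Cons a b1) then show ?case by (cases b2) auto
qed

lemma inj_on_join_paths:
  assumes A: "A \<subseteq> {pre @ b @ [c] | b. c \<notin> set b}" and B: "B \<subseteq> range (Cons c)"
  shows "inj_on join_paths (A \<times> B)"
proof (rule inj_onI, clarify)
  fix p1 q1 p2 q2
  assume mem: "p1 \<in> A" "q1 \<in> B" "p2 \<in> A" "q2 \<in> B" and eq: "join_paths (p1, q1) = join_paths (p2, q2)"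
  obtain b1 b2 where "p1 = pre @ b1 @ [c]" "c \<notin> set b1" "p2 = pre @ b2 @ [c]" "c \<notin> set b2"
    using mem(1,3) A by blast
  moreover obtain s1 s2 where "q1 = c # s1" "q2 = c # s2" using mem(2,4) B by blast
  ultimately show "p1 = p2 \<and> q1 = q2" using eq append_first_occurrence_eq[of c b1 b2 s1 s2] by simp
qed

text \<open>The strong Markov property at the first visit to \<open>c\<close> after the prefix \<open>pre\<close>.\<close>

lemma infsum_join_paths:
  assumes wg: "weighted_graph w"
    and A: "A \<subseteq> {pre @ b @ [c] | b. c \<notin> set b}" and B: "B \<subseteq> range (Cons c)"
    and sJ: "path_prob w summable_on join_paths ` (A \<times> B)"
  shows "infsum (path_prob w) (join_paths ` (A \<times> B)) = infsum (path_prob w) A * infsum (path_prob w) B"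
proof -
  let ?P = "path_prob w"
  have inj: "inj_on join_paths (A \<times> B)" by (rule inj_on_join_paths[OF A B])
  have prod: "(?P \<circ> join_paths) pq = ?P (fst pq) * ?P (snd pq)" if pq: "pq \<in> A \<times> B" for pq
  proof -
    obtain b s where "fst pq = pre @ b @ [c]" "snd pq = c # s" using pq A B unfolding mem_Times_iff by blast
    then show ?thesis using path_prob_append[of "pre @ b @ [c]" "c # s" w] by (simp add: join_paths_def)
  qed
  have "(?P \<circ> join_paths) summable_on (A \<times> B)"
    using sJ summable_on_reindex[OF inj] by blast
  then have sAB: "(\<lambda>pq. ?P (fst pq) * ?P (snd pq)) summable_on (A \<times> B)"
    using summable_on_cong[of "A \<times> B" "?P \<circ> join_paths" "\<lambda>pq. ?P (fst pq) * ?P (snd pq)"] prod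
    by blast
  have "infsum ?P (join_paths ` (A \<times> B)) = infsum (\<lambda>pq. ?P (fst pq) * ?P (snd pq)) (A \<times> B)"
    unfolding infsum_reindex[OF inj] by (rule infsum_cong[OF prod])
  also have "\<dots> = infsum (\<lambda>p. infsum (\<lambda>q. ?P p * ?P q) B) A"
    using infsum_Sigma_banach[OF sAB] by simp
  also have "\<dots> = infsum ?P A * infsum ?P B"
    by (simp add: infsum_cmult_right' infsum_cmult_left')
  finally show ?thesis .
qed

lemma infsum_Un_join_paths:
  assumes wg: "weighted_graph w" and sC: "path_prob w summable_on C"
    and C: "C = C' \<union> join_paths ` (A \<times> B)" and disj: "C' \<inter> join_paths ` (A \<times> B) = {}"
    and A: "A \<subseteq> {pre @ b @ [c] | b. c \<notin> set b}" and B: "B \<subseteq> range (Cons c)"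
  shows "infsum (path_prob w) C = infsum (path_prob w) C' + infsum (path_prob w) A * infsum (path_prob w) B"
proof -
  have "path_prob w summable_on C'" "path_prob w summable_on join_paths ` (A \<times> B)"
    using summable_on_subset[OF sC] C by blast+
  then show ?thesis
    unfolding C by (simp add: infsum_Un_disjoint disj infsum_join_paths[OF wg A B])
qed

subsection \<open>Decompositions of first-passage and return paths\<close>

definition return_paths :: "'a \<Rightarrow> 'a list set" where
  "return_paths u = {u # b @ [u] | b. u \<notin> set b}"

definition avoiding_returns :: "'a \<Rightarrow> 'a \<Rightarrow> 'a list set" where
  "avoiding_returns u v = {u # b @ [u] | b. u \<notin> set b \<and> v \<notin> set b}"

definition last_exit_paths :: "'a \<Rightarrow> 'a \<Rightarrow> 'a list set" where
  "last_exit_paths u v = {u # b @ [v] | b. u \<notin> set b \<and> v \<notin> set b}"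

definition hit_first_paths :: "'a \<Rightarrow> 'a \<Rightarrow> 'a \<Rightarrow> 'a list set" where
  "hit_first_paths e x y = {xs \<in> first_passage_paths e {x, y}. last xs = x}"

lemma first_passage_paths_iff:
  "xs \<in> first_passage_paths e S \<longleftrightarrow> (\<exists>b c. xs = b @ [c] \<and> hd xs = e \<and> c \<in> S \<and> set b \<inter> S = {})"
proof
  assume "xs \<in> first_passage_paths e S"
  then show "\<exists>b c. xs = b @ [c] \<and> hd xs = e \<and> c \<in> S \<and> set b \<inter> S = {}"
    unfolding first_passage_paths_def by (intro exI[of _ "butlast xs"] exI[of _ "last xs"]) auto
qed (auto simp: first_passage_paths_def)

lemma first_passage_paths_Cons: "first_passage_paths e S \<subseteq> range (Cons e)"
  unfolding first_passage_paths_def by (auto intro: list.collapse[symmetric])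

lemma first_passage_paths_singleton:
  assumes "u \<noteq> v"
  shows "first_passage_paths u {v} = {u # b @ [v] | b. v \<notin> set b}"
proof (intro equalityI subsetI)
  fix xs assume "xs \<in> first_passage_paths u {v}"
  then obtain b where "xs = b @ [v]" "hd xs = u" "v \<notin> set b"
    unfolding first_passage_paths_iff by blast
  with assms show "xs \<in> {u # b @ [v] | b. v \<notin> set b}" by (cases b) auto
qed (use assms in \<open>auto simp: first_passage_paths_iff\<close>)

lemma return_prob_eq_return_paths:
  "return_prob w g = (\<Sum>\<^sub>\<infinity>xs \<in> return_paths g. ennreal (path_prob w xs))"
proof -
  have "{xs. 2 \<le> length xs \<and> hd xs = g \<and> last xs = g \<and> g \<notin> set (tl (butlast xs))} = return_paths g"
  proof (intro equalityI subsetI)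
    fix xs assume "xs \<in> {xs. 2 \<le> length xs \<and> hd xs = g \<and> last xs = g \<and> g \<notin> set (tl (butlast xs))}"
    moreover have "xs = hd xs # tl (butlast xs) @ [last xs]" if "2 \<le> length xs"
      using that by (cases xs; cases "tl xs") (auto simp: butlast_append)
    ultimately show "xs \<in> return_paths g" unfolding return_paths_def by force
  qed (auto simp: return_paths_def butlast_append)
  then show ?thesis unfolding return_prob_def by simp
qed

lemma prefix_free_first_passage_paths: "prefix_free_from e (first_passage_paths e S)"
proof -
  have "zs = []" if "xs \<in> first_passage_paths e S" "xs @ zs \<in> first_passage_paths e S" for xs zs
  proof (rule ccontr)
    assume "zs \<noteq> []"
    then have "last xs \<in> set (butlast (xs @ zs))"
      using that(1) by (simp add: butlast_append first_passage_paths_def)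
    then show False using that unfolding first_passage_paths_def by blast
  qed
  then show ?thesis unfolding prefix_free_from_def first_passage_paths_def by blast
qed

lemma prefix_free_return_paths: "prefix_free_from u (return_paths u)"
  unfolding prefix_free_from_def return_paths_def
  by (auto simp: append_eq_append_conv2 Cons_eq_append_conv append_eq_Cons_conv)

lemma last_exit_paths_subset: "u \<noteq> v \<Longrightarrow> last_exit_paths u v \<subseteq> first_passage_paths u {v}"
  unfolding last_exit_paths_def first_passage_paths_singleton by auto

lemma avoiding_returns_subset: "avoiding_returns u v \<subseteq> return_paths u"
  unfolding avoiding_returns_def return_paths_def by auto

lemma hit_first_paths_subset: "hit_first_paths e x y \<subseteq> first_passage_paths e {x, y}"
  unfolding hit_first_paths_def by auto

lemma snoc_in_first_passage_paths [simp]: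
  "b @ [c] \<in> first_passage_paths e S \<longleftrightarrow> hd (b @ [c]) = e \<and> c \<in> S \<and> set b \<inter> S = {}"
  unfolding first_passage_paths_def by simp

lemma Cons_snoc_in_first_passage_paths [simp]:
  "u # b @ [c] \<in> first_passage_paths e S \<longleftrightarrow> u = e \<and> c \<in> S \<and> u \<notin> S \<and> set b \<inter> S = {}"
  using snoc_in_first_passage_paths[of "u # b"] by auto

lemma snoc_in_hit_first_paths [simp]:
  "b @ [c] \<in> hit_first_paths e x y \<longleftrightarrow> c = x \<and> hd (b @ [c]) = e \<and> x \<notin> set b \<and> y \<notin> set b"
  unfolding hit_first_paths_def by auto

lemma first_passage_paths_pair_split:
  assumes "x \<noteq> y"
  shows "first_passage_paths e {x, y} = hit_first_paths e x y \<union> hit_first_paths e y x"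
    and "hit_first_paths e x y \<inter> hit_first_paths e y x = {}"
  using assms unfolding hit_first_paths_def first_passage_paths_def by auto

lemma hit_first_paths_snoc: "hit_first_paths e x y \<subseteq> {[] @ b @ [x] | b. x \<notin> set b}"
  unfolding hit_first_paths_def first_passage_paths_iff by auto

lemma first_passage_paths_split_first_visit:
  assumes "x \<noteq> y"
  shows "first_passage_paths e {x} =
      hit_first_paths e x y \<union> join_paths ` (hit_first_paths e y x \<times> first_passage_paths y {x})"
proof -
  note join = mem_join_paths_image[OF hit_first_paths_snoc first_passage_paths_Cons, unfolded append_Nil]
  show ?thesis
  proof (intro equalityI subsetI)
    fix zs assume zs: "zs \<in> first_passage_paths e {x}"
    then obtain b' where b': "zs = b' @ [x]" "hd zs = e" "x \<notin> set b'"
      unfolding first_passage_paths_iff by auto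
    show "zs \<in> hit_first_paths e x y \<union> join_paths ` (hit_first_paths e y x \<times> first_passage_paths y {x})"
    proof (cases "y \<in> set zs")
      case False
      then show ?thesis using b' by auto
    next
      case True
      then obtain b s where bs: "zs = b @ y # s" "y \<notin> set b" by (blast dest: split_list_first)
      have "last (y # s) = x" using bs(1) b'(1) by (metis last_appendR last_snoc list.distinct(1))
      then have "s \<noteq> []" "last s = x" using assms by (auto split: if_splits)
      then obtain s' where s': "s = s' @ [x]" by (metis append_butlast_last_id)
      then have "b' = b @ y # s'" using bs b' by simp
      then have "b @ [y] \<in> hit_first_paths e y x" "y # s \<in> first_passage_paths y {x}"
        using bs b' s' assms by (auto simp: hd_append)
      then show ?thesis unfolding Un_iff join using bs by blast
    qed
  next
    fix zs assume "zs \<in> hit_first_paths e x y \<union> join_paths ` (hit_first_paths e y x \<times> first_passage_paths y {x})"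
    then show "zs \<in> first_passage_paths e {x}"
      unfolding Un_iff join
    proof
      assume "zs \<in> hit_first_paths e x y"
      then show ?thesis unfolding hit_first_paths_def first_passage_paths_def by auto
    next
      assume "\<exists>b s. zs = b @ y # s \<and> y \<notin> set b \<and> b @ [y] \<in> hit_first_paths e y x
        \<and> y # s \<in> first_passage_paths y {x}"
      then obtain b s' where "zs = (b @ y # s') @ [x]" "b @ [y] \<in> hit_first_paths e y x" "x \<notin> set s'"
        using first_passage_paths_singleton[OF assms[symmetric]] by auto
      then show ?thesis using assms by (auto simp: first_passage_paths_def hd_append butlast_append)
    qed
  qed
qed

lemma first_passage_paths_split_first_visit_disjoint:
  assumes "x \<noteq> y"
  shows "hit_first_paths e x y \<inter> join_paths ` (hit_first_paths e y x \<times> first_passage_paths y {x}) = {}"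
proof -
  note join = mem_join_paths_image[OF hit_first_paths_snoc first_passage_paths_Cons, unfolded append_Nil]
  have "y \<in> set zs" if "zs \<in> join_paths ` (hit_first_paths e y x \<times> first_passage_paths y {x})" for zs
    using that unfolding join by auto
  moreover have "y \<notin> set zs" if "zs \<in> hit_first_paths e x y" for zs
    using that assms unfolding hit_first_paths_def first_passage_paths_iff by auto
  ultimately show ?thesis by blast
qed

lemma avoiding_returns_shape: "avoiding_returns u v \<subseteq> {[u] @ b @ [u] | b. u \<notin> set b}"
  unfolding avoiding_returns_def by auto

lemma last_exit_paths_shape: "u \<noteq> v \<Longrightarrow> last_exit_paths u v \<subseteq> {[] @ b @ [v] | b. v \<notin> set b}"
  unfolding last_exit_paths_def by force

lemma first_passage_paths_split_last_exit:
  assumes "u \<noteq> v"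
  shows "first_passage_paths u {v} =
      last_exit_paths u v \<union> join_paths ` (avoiding_returns u v \<times> first_passage_paths u {v})"
proof -
  let ?F = "{u # b @ [v] | b. v \<notin> set b}"
  have "?F \<subseteq> range (Cons u)" by auto
  note join = mem_join_paths_image[OF avoiding_returns_shape this]
  show ?thesis
    unfolding first_passage_paths_singleton[OF assms]
  proof (intro equalityI subsetI)
    fix zs assume "zs \<in> ?F"
    then obtain b where zs: "zs = u # b @ [v]" "v \<notin> set b" by blast
    show "zs \<in> last_exit_paths u v \<union> join_paths ` (avoiding_returns u v \<times> ?F)"
    proof (cases "u \<in> set b")
      case False
      then show ?thesis using zs unfolding last_exit_paths_def by blast
    next
      case True
      then obtain b1 b2 where "b = b1 @ u # b2" "u \<notin> set b1" by (blast dest: split_list_first)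
      then have "zs = [u] @ b1 @ u # b2 @ [v]" "[u] @ b1 @ [u] \<in> avoiding_returns u v" "u # b2 @ [v] \<in> ?F"
        using zs unfolding avoiding_returns_def by auto
      then show ?thesis unfolding Un_iff join using \<open>u \<notin> set b1\<close> by blast
    qed
  next
    fix zs assume "zs \<in> last_exit_paths u v \<union> join_paths ` (avoiding_returns u v \<times> ?F)"
    then consider "zs \<in> last_exit_paths u v"
      | b b2 where "zs = u # (b @ u # b2) @ [v]" "v \<notin> set b" "v \<notin> set b2"
      unfolding Un_iff join avoiding_returns_def by auto
    then show "zs \<in> ?F"
    proof cases
      case 1
      then show ?thesis unfolding last_exit_paths_def by blast
    next
      case 2
      then show ?thesis using assms by force
    qed
  qed
qed

lemma first_passage_paths_split_last_exit_disjoint: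
  assumes "u \<noteq> v"
  shows "last_exit_paths u v \<inter> join_paths ` (avoiding_returns u v \<times> first_passage_paths u {v}) = {}"
proof -
  note join = mem_join_paths_image[OF avoiding_returns_shape first_passage_paths_Cons]
  have "u \<in> set (tl zs)" if "zs \<in> join_paths ` (avoiding_returns u v \<times> first_passage_paths u {v})" for zs
    using that unfolding join by auto
  moreover have "u \<notin> set (tl zs)" if "zs \<in> last_exit_paths u v" for zs
    using that assms unfolding last_exit_paths_def by auto
  ultimately show ?thesis by blast
qed

lemma return_paths_split_first_visit:
  assumes "u \<noteq> v"
  shows "return_paths u = avoiding_returns u v \<union> join_paths ` (last_exit_paths u v \<times> first_passage_paths v {u})"
proof -
  let ?F = "{v # b @ [u] | b. u \<notin> set b}"
  have "?F \<subseteq> range (Cons v)" by auto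
  note join = mem_join_paths_image[OF last_exit_paths_shape[OF assms] this, unfolded append_Nil]
  show ?thesis
    unfolding first_passage_paths_singleton[OF assms[symmetric]]
  proof (intro equalityI subsetI)
    fix zs assume "zs \<in> return_paths u"
    then obtain b where zs: "zs = u # b @ [u]" "u \<notin> set b" unfolding return_paths_def by blast
    show "zs \<in> avoiding_returns u v \<union> join_paths ` (last_exit_paths u v \<times> ?F)"
    proof (cases "v \<in> set b")
      case False
      then show ?thesis using zs unfolding avoiding_returns_def by blast
    next
      case True
      then obtain b1 b2 where "b = b1 @ v # b2" "v \<notin> set b1" by (blast dest: split_list_first)
      then have "zs = (u # b1) @ v # b2 @ [u]" "(u # b1) @ [v] \<in> last_exit_paths u v" "v # b2 @ [u] \<in> ?F"
        using zs unfolding last_exit_paths_def by auto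
      moreover have "v \<notin> set (u # b1)" using \<open>v \<notin> set b1\<close> assms by simp
      ultimately show ?thesis unfolding Un_iff join by blast
    qed
  next
    fix zs assume "zs \<in> avoiding_returns u v \<union> join_paths ` (last_exit_paths u v \<times> ?F)"
    then consider "zs \<in> avoiding_returns u v"
      | b1 b2 where "zs = u # (b1 @ v # b2) @ [u]" "u \<notin> set b1" "u \<notin> set b2"
      unfolding Un_iff join last_exit_paths_def by auto
    then show "zs \<in> return_paths u"
    proof cases
      case 1
      then show ?thesis using avoiding_returns_subset[of u v] by blast
    next
      case 2
      then show ?thesis using assms unfolding return_paths_def by force
    qed
  qed
qed

lemma return_paths_split_first_visit_disjoint:
  assumes "u \<noteq> v"
  shows "avoiding_returns u v \<inter> join_paths ` (last_exit_paths u v \<times> first_passage_paths v {u}) = {}"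
proof -
  note join = mem_join_paths_image[OF last_exit_paths_shape[OF assms] first_passage_paths_Cons, unfolded append_Nil]
  have "v \<in> set zs" if "zs \<in> join_paths ` (last_exit_paths u v \<times> first_passage_paths v {u})" for zs
    using that unfolding join by auto
  moreover have "v \<notin> set zs" if "zs \<in> avoiding_returns u v" for zs
    using that assms unfolding avoiding_returns_def by auto
  ultimately show ?thesis by blast
qed

subsection \<open>Renewal equations\<close>

lemma summable_first_passage_paths:
  "weighted_graph w \<Longrightarrow> locally_finite w \<Longrightarrow> path_prob w summable_on first_passage_paths e S"
  by (rule prefix_free_summable[OF _ _ prefix_free_first_passage_paths])

lemma summable_return_paths:
  "weighted_graph w \<Longrightarrow> locally_finite w \<Longrightarrow> path_prob w summable_on return_paths u"
  by (rule prefix_free_summable[OF _ _ prefix_free_return_paths])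

lemma hit_pair_split:
  assumes "weighted_graph w" "locally_finite w" "x \<noteq> y"
  shows "infsum (path_prob w) (first_passage_paths e {x, y})
    = infsum (path_prob w) (hit_first_paths e x y) + infsum (path_prob w) (hit_first_paths e y x)"
proof -
  have s: "path_prob w summable_on hit_first_paths e a b" for a b
    using prefix_free_summable[OF assms(1,2) prefix_free_from_subset[OF
        prefix_free_first_passage_paths hit_first_paths_subset]] .
  show ?thesis
    unfolding first_passage_paths_pair_split(1)[OF assms(3)]
    by (rule infsum_Un_disjoint[OF s s first_passage_paths_pair_split(2)[OF assms(3)]])
qed

lemma hit_renewal_first_visit:
  assumes wg: "weighted_graph w" and lf: "locally_finite w" and "x \<noteq> y"
  shows "infsum (path_prob w) (first_passage_paths e {x})
    = infsum (path_prob w) (hit_first_paths e x y)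
      + infsum (path_prob w) (hit_first_paths e y x) * infsum (path_prob w) (first_passage_paths y {x})"
  by (rule infsum_Un_join_paths[OF wg summable_first_passage_paths[OF wg lf]
        first_passage_paths_split_first_visit[OF assms(3)]
        first_passage_paths_split_first_visit_disjoint[OF assms(3)] hit_first_paths_snoc first_passage_paths_Cons])

lemma hit_renewal_last_exit:
  assumes wg: "weighted_graph w" and lf: "locally_finite w" and "u \<noteq> v"
  shows "infsum (path_prob w) (first_passage_paths u {v})
    = infsum (path_prob w) (last_exit_paths u v)
      + infsum (path_prob w) (avoiding_returns u v) * infsum (path_prob w) (first_passage_paths u {v})"
  by (rule infsum_Un_join_paths[OF wg summable_first_passage_paths[OF wg lf]
        first_passage_paths_split_last_exit[OF assms(3)]
        first_passage_paths_split_last_exit_disjoint[OF assms(3)] avoiding_returns_shape first_passage_paths_Cons])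

lemma return_renewal:
  assumes wg: "weighted_graph w" and lf: "locally_finite w" and "u \<noteq> v"
  shows "infsum (path_prob w) (return_paths u)
    = infsum (path_prob w) (avoiding_returns u v)
      + infsum (path_prob w) (last_exit_paths u v) * infsum (path_prob w) (first_passage_paths v {u})"
  by (rule infsum_Un_join_paths[OF wg summable_return_paths[OF wg lf]
        return_paths_split_first_visit[OF assms(3)]
        return_paths_split_first_visit_disjoint[OF assms(3)] last_exit_paths_shape[OF assms(3)]
        first_passage_paths_Cons])

subsection \<open>Symmetry of hitting probabilities\<close>

lemma last_exit_paths_rev: "last_exit_paths u v = rev ` last_exit_paths v u"
proof (intro equalityI subsetI)
  fix xs assume "xs \<in> last_exit_paths u v"
  then obtain b where "xs = rev (v # rev b @ [u])" "v # rev b @ [u] \<in> last_exit_paths v u"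
    unfolding last_exit_paths_def by auto
  then show "xs \<in> rev ` last_exit_paths v u" by blast
next
  fix xs assume "xs \<in> rev ` last_exit_paths v u"
  then obtain b where "xs = u # rev b @ [v]" "u \<notin> set (rev b)" "v \<notin> set (rev b)"
    unfolding last_exit_paths_def by auto
  then show "xs \<in> last_exit_paths u v" unfolding last_exit_paths_def by blast
qed

lemma last_exit_prob_sym:
  assumes "weighted_graph w" and "vertex_transitive w"
  shows "infsum (path_prob w) (last_exit_paths u v) = infsum (path_prob w) (last_exit_paths v u)"
proof -
  have "infsum (path_prob w) (last_exit_paths u v) = infsum (path_prob w \<circ> rev) (last_exit_paths v u)"
    unfolding last_exit_paths_rev[of u v] by (rule infsum_reindex) (simp add: inj_on_def)
  also have "\<dots> = infsum (path_prob w) (last_exit_paths v u)"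
    using path_prob_rev[OF assms(1) deg_eq_of_vertex_transitive[OF assms(2)]] by (simp add: o_def)
  finally show ?thesis .
qed

lemma return_paths_automorphism:
  assumes "bij \<phi>"
  shows "return_paths (\<phi> u) = map \<phi> ` return_paths u"
proof (intro equalityI subsetI)
  fix xs assume "xs \<in> return_paths (\<phi> u)"
  then obtain c where c: "xs = \<phi> u # c @ [\<phi> u]" "\<phi> u \<notin> set c" unfolding return_paths_def by blast
  define b where "b = map (inv \<phi>) c"
  have "map \<phi> b = c" unfolding b_def using bij_is_surj[OF assms] by (simp add: surj_iff)
  then have "xs = map \<phi> (u # b @ [u])" "u \<notin> set b" using c by auto
  then show "xs \<in> map \<phi> ` return_paths u" unfolding return_paths_def by blast
next
  fix xs assume "xs \<in> map \<phi> ` return_paths u"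
  then obtain b where "xs = \<phi> u # map \<phi> b @ [\<phi> u]" "u \<notin> set b"
    unfolding return_paths_def by auto
  moreover then have "\<phi> u \<notin> set (map \<phi> b)" using bij_is_inj[OF assms] by (simp add: inj_image_mem_iff)
  ultimately show "xs \<in> return_paths (\<phi> u)" unfolding return_paths_def by blast
qed

lemma return_prob_vertex_independent:
  assumes "weighted_graph w" and "vertex_transitive w"
  shows "infsum (path_prob w) (return_paths u) = infsum (path_prob w) (return_paths v)"
proof -
  obtain \<phi> where \<phi>: "bij \<phi>" "\<And>a b. w (\<phi> a) (\<phi> b) = w a b" "\<phi> u = v"
    using assms(2) unfolding vertex_transitive_def by blast
  have "infsum (path_prob w) (return_paths v) = infsum (path_prob w \<circ> map \<phi>) (return_paths u)"
    unfolding \<phi>(3)[symmetric] return_paths_automorphism[OF \<phi>(1)]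
    by (rule infsum_reindex, rule inj_on_subset[OF inj_mapI[OF bij_is_inj[OF \<phi>(1)]]]) simp
  also have "\<dots> = infsum (path_prob w) (return_paths u)"
    using path_prob_map[OF \<phi>(2) deg_eq_of_vertex_transitive[OF assms(2)]] by (simp add: o_def)
  finally show ?thesis by simp
qed

lemma last_exit_prob_pos:
  assumes wg: "weighted_graph w" and lf: "locally_finite w" and "u \<noteq> v"
    and pos: "0 < infsum (path_prob w) (first_passage_paths u {v})"
  shows "0 < infsum (path_prob w) (last_exit_paths u v)"
proof -
  have "\<exists>xs \<in> first_passage_paths u {v}. 0 < path_prob w xs"
  proof (rule ccontr)
    assume "\<not> ?thesis"
    then have "path_prob w xs = 0" if "xs \<in> first_passage_paths u {v}" for xs
      using that path_prob_nonneg[OF wg, of xs] by auto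
    then show False using pos by (simp add: infsum_0)
  qed
  then obtain xs where xs: "xs \<in> first_passage_paths u {v}" "0 < path_prob w xs" by blast
  then obtain b where b: "xs = u # b @ [v]" "v \<notin> set b"
    unfolding first_passage_paths_singleton[OF \<open>u \<noteq> v\<close>] by blast
  obtain b1 s where s: "u # b = b1 @ u # s" "u \<notin> set s"
    using split_list_last[of u "u # b"] by auto
  have "v \<notin> set s" using b(2) s(1) \<open>u \<noteq> v\<close> by (metis Un_iff list.set_intros(2) set_ConsD set_append)
  then have Q: "u # s @ [v] \<in> last_exit_paths u v" using s(2) unfolding last_exit_paths_def by blast
  have "xs = (b1 @ [u]) @ tl (u # s @ [v])" using b(1) s(1) by (metis append.assoc append_Cons list.sel(3) self_append_conv2)
  then have "path_prob w xs = path_prob w (b1 @ [u]) * path_prob w (u # s @ [v])"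
    using path_prob_append[of "b1 @ [u]" "u # s @ [v]" w] by simp
  then have "0 < path_prob w (u # s @ [v])"
    using xs(2) path_prob_nonneg[OF wg] by (metis mult_zero_right order.not_eq_order_implies_strict)
  also have "path_prob w (u # s @ [v]) = infsum (path_prob w) {u # s @ [v]}" by simp
  also have "\<dots> \<le> infsum (path_prob w) (last_exit_paths u v)"
    using Q path_prob_nonneg[OF wg] prefix_free_summable[OF wg lf
        prefix_free_from_subset[OF prefix_free_first_passage_paths last_exit_paths_subset[OF \<open>u \<noteq> v\<close>]]]
    by (intro infsum_mono_neutral) auto
  finally show ?thesis .
qed

lemma renewal_equations_symmetric:
  fixes A B q r s R :: real
  assumes A: "0 \<le> A" "A \<le> 1" and B: "0 \<le> B" "B \<le> 1" and "0 < q"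
    and hA: "A = q + r * A" and hB: "B = q + s * B"
    and R: "R = r + q * B" "R = s + q * A"
  shows "A = B"
proof -
  \<comment> \<open>\<open>A a = B b = q\<close> and \<open>b - a = q (A - B)\<close> give \<open>(b - a)(a b - q\<^sup>2) = 0\<close>;
    \<open>a b = q\<^sup>2\<close> forces \<open>A B = 1\<close>.\<close>
  define a b where "a = 1 - r" and "b = 1 - s"
  have Aa: "A * a = q" and Bb: "B * b = q" using hA hB unfolding a_def b_def by (simp_all add: algebra_simps)
  have "0 < a" "0 < b"
    using mult_nonneg_nonpos[of A a] mult_nonneg_nonpos[of B b] A B Aa Bb \<open>0 < q\<close> by linarith+
  have "b - a = q * (A - B)" using R unfolding a_def b_def by (simp add: algebra_simps)
  then have "(b - a) * (a * b) = q * (A - B) * (a * b)" by simp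
  also have "\<dots> = q * ((A * a) * b - (B * b) * a)" by (simp add: algebra_simps)
  also have "\<dots> = (b - a) * (q * q)" unfolding Aa Bb by (simp add: algebra_simps)
  finally consider "a = b" | "a * b = q * q" by force
  then show ?thesis
  proof cases
    case 1
    then show ?thesis using Aa Bb \<open>0 < a\<close> by (metis mult_cancel_right less_irrefl)
  next
    case 2
    have "(A * B) * (a * b) = (A * a) * (B * b)" by (simp add: algebra_simps)
    also have "\<dots> = 1 * (a * b)" using 2 Aa Bb by simp
    finally have "A * B = 1" using \<open>0 < a\<close> \<open>0 < b\<close> by simp
    then show ?thesis
      using mult_left_le[of B A] mult_left_le[of A B] mult.commute[of A B] A B by linarith
  qed
qed

lemma hit_prob_sym:
  assumes wg: "weighted_graph w" and lf: "locally_finite w" and vt: "vertex_transitive w" and "u \<noteq> v"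
  shows "infsum (path_prob w) (first_passage_paths u {v}) = infsum (path_prob w) (first_passage_paths v {u})"
proof -
  let ?F = "\<lambda>a b. infsum (path_prob w) (first_passage_paths a {b})"
  let ?q = "infsum (path_prob w) (last_exit_paths u v)"
  have Q: "infsum (path_prob w) (last_exit_paths v u) = ?q" using last_exit_prob_sym[OF wg vt] by simp
  have bounds: "0 \<le> ?F a b" "?F a b \<le> 1" for a b
    using infsum_path_prob_nonneg[OF wg]
      prefix_free_infsum_le_1[OF wg lf prefix_free_first_passage_paths] by auto
  show ?thesis
  proof (cases "0 < ?q")
    case True
    show ?thesis
      using hit_renewal_last_exit[OF wg lf, of u v] hit_renewal_last_exit[OF wg lf, of v u]
        return_renewal[OF wg lf, of u v] return_renewal[OF wg lf, of v u]
        return_prob_vertex_independent[OF wg vt, of u v] Q \<open>u \<noteq> v\<close>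
      by (intro renewal_equations_symmetric[OF bounds bounds True]) auto
  next
    case False
    then show ?thesis
      using last_exit_prob_pos[OF wg lf, of u v] last_exit_prob_pos[OF wg lf, of v u] Q \<open>u \<noteq> v\<close>
        bounds[of u v] bounds[of v u] by fastforce
  qed
qed

lemma hit_prob_eq_infsum:
  "weighted_graph w \<Longrightarrow> locally_finite w \<Longrightarrow>
    hit_prob w e S = ennreal (infsum (path_prob w) (first_passage_paths e S))"
  unfolding hit_prob_def by (rule ennreal_infsum_path_prob[OF _ summable_first_passage_paths])

lemma hit_first_eq_infsum:
  assumes "weighted_graph w" "locally_finite w" "x \<noteq> y"
  shows "hit_first w e x y = ennreal (infsum (path_prob w) (hit_first_paths e x y))"
  using ennreal_infsum_path_prob[OF assms(1) prefix_free_summable[OF assms(1,2)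
      prefix_free_from_subset[OF prefix_free_first_passage_paths hit_first_paths_subset]]] assms(3)
  unfolding hit_first_def hit_first_paths_def by simp

lemma hit_prob_less_iff:
  "weighted_graph w \<Longrightarrow> locally_finite w \<Longrightarrow> hit_prob w e S < hit_prob w e T \<longleftrightarrow>
    infsum (path_prob w) (first_passage_paths e S) < infsum (path_prob w) (first_passage_paths e T)"
  unfolding hit_prob_eq_infsum by (simp add: ennreal_less_iff infsum_path_prob_nonneg)

lemma cond_hit_first_eq_ratio:
  assumes wg: "weighted_graph w" and lf: "locally_finite w" and "x \<noteq> y"
  shows "cond_hit_first w e x y = infsum (path_prob w) (hit_first_paths e x y)
    / (infsum (path_prob w) (hit_first_paths e x y) + infsum (path_prob w) (hit_first_paths e y x))"
  using infsum_path_prob_nonneg[OF wg]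
  unfolding cond_hit_first_def hit_first_eq_infsum[OF wg lf \<open>x \<noteq> y\<close>] hit_prob_eq_infsum[OF wg lf]
    hit_pair_split[OF wg lf \<open>x \<noteq> y\<close>] by (simp del: ennreal_plus)

lemma return_prob_eq_infsum:
  "weighted_graph w \<Longrightarrow> locally_finite w \<Longrightarrow>
    return_prob w g = ennreal (infsum (path_prob w) (return_paths g))"
  unfolding return_prob_eq_return_paths by (rule ennreal_infsum_path_prob[OF _ summable_return_paths])

lemma hit_prob_lt_1_of_transient:
  assumes wg: "weighted_graph w" and lf: "locally_finite w" and vt: "vertex_transitive w"
    and "transient w g" and "u \<noteq> v"
  shows "infsum (path_prob w) (first_passage_paths u {v}) < 1"
proof (rule ccontr)
  have "infsum (path_prob w) (return_paths u) < 1"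
    using \<open>transient w g\<close> infsum_path_prob_nonneg[OF wg] return_prob_vertex_independent[OF wg vt, of g u]
    unfolding transient_def return_prob_eq_infsum[OF wg lf] by (simp add: ennreal_less_iff)
  moreover assume "\<not> ?thesis"
  then have "infsum (path_prob w) (first_passage_paths u {v}) = 1"
    using prefix_free_infsum_le_1[OF wg lf prefix_free_first_passage_paths] by (meson antisym not_le)
  moreover from this have "infsum (path_prob w) (first_passage_paths v {u}) = 1"
    using hit_prob_sym[OF wg lf vt \<open>u \<noteq> v\<close>] by simp
  ultimately show False
    using hit_renewal_last_exit[OF wg lf \<open>u \<noteq> v\<close>] return_renewal[OF wg lf \<open>u \<noteq> v\<close>] by simp
qed

lemma conditional_ratio_gt_half:
  fixes a b p :: real
  assumes "0 \<le> a" "0 \<le> b" "p \<le> 1"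
  shows "a + b * p > b + a * p \<longrightarrow> a / (a + b) > 1/2"
    and "p < 1 \<Longrightarrow> a + b * p > b + a * p \<longleftrightarrow> a / (a + b) > 1/2"
proof -
  have diff: "a + b * p > b + a * p \<longleftrightarrow> (a - b) * (1 - p) > 0" by (simp add: algebra_simps)
  have half: "a / (a + b) > 1/2 \<longleftrightarrow> a > b"
    using assms by (cases "a + b = 0") (auto simp: field_simps)
  show "a + b * p > b + a * p \<longrightarrow> a / (a + b) > 1/2"
    using assms(3) unfolding diff half by (auto simp: zero_less_mult_iff)
  show "p < 1 \<Longrightarrow> a + b * p > b + a * p \<longleftrightarrow> a / (a + b) > 1/2"
    unfolding diff half by (simp add: zero_less_mult_iff)
qed

theorem lemma6p5:
  fixes w :: "'a \<Rightarrow> 'a \<Rightarrow> real" and e x y :: 'a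
  assumes "weighted_graph w" and "locally_finite w" and "vertex_transitive w"
  shows "(hit_prob w e {x} > hit_prob w e {y} \<longrightarrow> cond_hit_first w e x y > 1/2)
       \<and> (transient w e \<longrightarrow>
            (hit_prob w e {x} > hit_prob w e {y} \<longleftrightarrow> cond_hit_first w e x y > 1/2))"
proof (cases "x = y")
  case True
  \<comment> \<open>\<open>hit_first\<close> is \<open>0\<close> when \<open>x = y\<close>, so both sides of each claim are false.\<close>
  then show ?thesis by (simp add: cond_hit_first_def hit_first_def)
next
  case False
  note wg = assms(1) and lf = assms(2) and vt = assms(3)
  define a where "a = infsum (path_prob w) (hit_first_paths e x y)"
  define b where "b = infsum (path_prob w) (hit_first_paths e y x)"
  define p where "p = infsum (path_prob w) (first_passage_paths y {x})"
  have bounds: "0 \<le> a" "0 \<le> b" "p \<le> 1"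
    unfolding a_def b_def p_def
    using infsum_path_prob_nonneg[OF wg] prefix_free_infsum_le_1[OF wg lf prefix_free_first_passage_paths] by auto
  have "infsum (path_prob w) (first_passage_paths e {x}) = a + b * p"
    unfolding a_def b_def p_def by (rule hit_renewal_first_visit[OF wg lf False])
  moreover have "infsum (path_prob w) (first_passage_paths e {y}) = b + a * p"
    using hit_renewal_first_visit[OF wg lf False[symmetric]] hit_prob_sym[OF wg lf vt False]
    unfolding a_def b_def p_def by simp
  ultimately have cmp: "hit_prob w e {x} > hit_prob w e {y} \<longleftrightarrow> a + b * p > b + a * p"
    unfolding hit_prob_less_iff[OF wg lf] by presburger
  have cond: "cond_hit_first w e x y = a / (a + b)"
    unfolding a_def b_def by (rule cond_hit_first_eq_ratio[OF wg lf False])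
  have "transient w e \<Longrightarrow> p < 1"
    unfolding p_def by (rule hit_prob_lt_1_of_transient[OF wg lf vt _ False[symmetric]])
  then show ?thesis unfolding cmp cond using conditional_ratio_gt_half[OF bounds] by blast
qed

end
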